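(* Let $G=(V,E)$ be a directed unweighted graph with diameter $D=3h+z$, where $h\ge0$, $z\in\{0,1,2\}$, let $\Delta\ge1$, and let $\tilde h\ge h$ be an integer. Let $\hat D$ be the output of Approx-Diam-Sparse$(G,\tilde h)$. Then $2h+z\le\hat D\le D$.
   Context: $d(u,v)$ is the shortest-path distance from $u$ to $v$; $d^{\mathrm{out}}(v)=\max_u d(v,u)$, $d^{\mathrm{in}}(v)=\max_u d(u,v)$; $B^{\mathrm{out}}(v,r)=\{u:d(v,u)\le r\}$; for $H\subseteq V$, $d(v,H)=\min_{u\in H}d(v,u)$ ($=\infty$ if $H=\emptyset$). Approx-Diam-Sparse$(G,\tilde h)$ with parameter $\Delta$: let $H$ be the set of vertices of outdegree at least $\Delta$; compute $d^{\mathrm{out}}(x)$ for every $x\in H$; compute $d(v,H)$ for all $v$ and pick $w$ maximizing $d(w,H)$; compute $d^{\mathrm{out}}(w)$; let $h'=\min\{\tilde h+1,d(w,H)\}$ and compute $d^{\mathrm{in}}(v)$ for every $v\in B^{\mathrm{out}}(w,h')$; output $\hat D=\max\big(\max_{x\in H}d^{\mathrm{out}}(x),\,d^{\mathrm{out}}(w),\,\max_{v\in B^{\mathrm{out}}(w,h')}d^{\mathrm{in}}(v)\big)$. *)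

theory Defs
  imports Main "HOL-Library.Extended_Nat"
begin

definition dist :: "('a \<times> 'a) set \<Rightarrow> 'a \<Rightarrow> 'a \<Rightarrow> enat" where
  "dist E u v = (if \<exists>n. (u, v) \<in> E ^^ n then enat (LEAST n. (u, v) \<in> E ^^ n) else \<infinity>)"

definition dout :: "'a set \<Rightarrow> ('a \<times> 'a) set \<Rightarrow> 'a \<Rightarrow> enat" where
  "dout V E v = (SUP u\<in>V. dist E v u)"

definition din :: "'a set \<Rightarrow> ('a \<times> 'a) set \<Rightarrow> 'a \<Rightarrow> enat" where
  "din V E v = (SUP u\<in>V. dist E u v)"

definition diameter :: "'a set \<Rightarrow> ('a \<times> 'a) set \<Rightarrow> enat" where
  "diameter V E = (SUP u\<in>V. SUP v\<in>V. dist E u v)"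

definition ball_out :: "'a set \<Rightarrow> ('a \<times> 'a) set \<Rightarrow> 'a \<Rightarrow> enat \<Rightarrow> 'a set" where
  "ball_out V E v r = {u \<in> V. dist E v u \<le> r}"

text \<open>Distance to a set; INF over the empty set is \<infinity>.\<close>
definition dist_set :: "('a \<times> 'a) set \<Rightarrow> 'a \<Rightarrow> 'a set \<Rightarrow> enat" where
  "dist_set E v H = (INF u\<in>H. dist E v u)"

definition outdeg :: "('a \<times> 'a) set \<Rightarrow> 'a \<Rightarrow> nat" where
  "outdeg E v = card {u. (v, u) \<in> E}"

definition high_deg :: "'a set \<Rightarrow> ('a \<times> 'a) set \<Rightarrow> nat \<Rightarrow> 'a set" where
  "high_deg V E \<Delta> = {v \<in> V. outdeg E v \<ge> \<Delta>}"

text \<open>Output of Approx-Diam-Sparse(G, ht) with parameter \<Delta>, given the chosen vertex w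
  (w must maximize dist_set over V; this is imposed in the theorem).
  Max over an empty H contributes nothing (Sup {} = 0).\<close>
definition approx_diam_sparse ::
  "'a set \<Rightarrow> ('a \<times> 'a) set \<Rightarrow> nat \<Rightarrow> nat \<Rightarrow> 'a \<Rightarrow> enat" where
  "approx_diam_sparse V E \<Delta> ht w =
     (let H = high_deg V E \<Delta>;
          h' = min (enat ht + 1) (dist_set E w H)
      in max (SUP x\<in>H. dout V E x)
             (max (dout V E w) (SUP v\<in>ball_out V E w h'. din V E v)))"

end

theory Submission
  imports Defs
begin

(* Upper bound: every quantity the algorithm maximises is an eccentricity of a vertex of V,
   hence at most the diameter.
   Lower bound: fix a diametral pair a, b with d(a,b) = D.  If some high-degree vertex x lies
   within distance h of a, then by the reverse triangle inequality d(x,b) >= 2h+z, so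
   d_out(x) >= 2h+z.  Otherwise d(a,H) > h, hence d(w,H) > h by the choice of w, and the ball
   around w that the algorithm explores has radius at least h+1.  If d_out(w) < 2h+z, split a
   shortest w-b path after min(d(w,b), h+1) steps; the split vertex v lies in the ball and is
   so close to b that d(a,v) >= 2h+z, i.e. d_in(v) >= 2h+z. *)

lemma dist_le_relpow: "(u, v) \<in> E ^^ n \<Longrightarrow> dist E u v \<le> enat n"
  unfolding dist_def by (auto intro: Least_le)

lemma relpow_of_dist: "dist E u v = enat m \<Longrightarrow> (u, v) \<in> E ^^ m"
  unfolding dist_def by (auto split: if_splits intro: LeastI_ex)

lemma dist_triangle: "dist E u w \<le> dist E u v + dist E v w"
proof (cases "dist E u v"; cases "dist E v w")
  fix m n assume m: "dist E u v = enat m" and n: "dist E v w = enat n"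
  have "(u, w) \<in> E ^^ (m + n)"
    using relpow_of_dist[OF m] relpow_of_dist[OF n] by (auto simp: relpow_add)
  then show ?thesis using m n by (simp add: dist_le_relpow)
qed simp_all

lemma far_from_target:
  assumes "enat (p + q) \<le> dist E a b" and "dist E a x \<le> enat p"
  shows "enat q \<le> dist E x b"
proof (cases "dist E x b")
  case (enat r)
  have "enat (p + q) \<le> enat p + enat r"
    using assms dist_triangle[of E a b x] enat by (metis add_right_mono order_trans)
  then show ?thesis using enat by simp
qed simp

lemma far_from_source:
  assumes "enat (p + q) \<le> dist E a b" and "dist E x b \<le> enat p"
  shows "enat q \<le> dist E a x"
proof (cases "dist E a x")
  case (enat r)
  have "enat (p + q) \<le> enat r + enat p"
    using assms dist_triangle[of E a b x] enat by (metis add_left_mono order_trans)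
  then show ?thesis using enat by simp
qed simp

lemma dist_split:
  assumes "dist E u v = enat m" and "k \<le> m"
  obtains x where "(u, x) \<in> E ^^ k" and "dist E x v \<le> enat (m - k)"
proof -
  have "(u, v) \<in> E ^^ (k + (m - k))" using relpow_of_dist[OF assms(1)] assms(2) by simp
  then obtain x where "(u, x) \<in> E ^^ k" "(x, v) \<in> E ^^ (m - k)" by (auto simp: relpow_add)
  then show thesis by (meson that dist_le_relpow)
qed

lemma relpow_stays_in:
  "E \<subseteq> V \<times> V \<Longrightarrow> (u, x) \<in> E ^^ k \<Longrightarrow> u \<in> V \<Longrightarrow> x \<in> V"
  by (induction k arbitrary: x) auto

lemma dist_le_diameter: "u \<in> V \<Longrightarrow> v \<in> V \<Longrightarrow> dist E u v \<le> diameter V E"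
  unfolding diameter_def by (meson SUP_upper2 SUP_upper)

lemma dout_le_diameter: "x \<in> V \<Longrightarrow> dout V E x \<le> diameter V E"
  unfolding dout_def by (simp add: SUP_least dist_le_diameter)

lemma din_le_diameter: "x \<in> V \<Longrightarrow> din V E x \<le> diameter V E"
  unfolding din_def by (simp add: SUP_least dist_le_diameter)

lemma dout_ge: "b \<in> V \<Longrightarrow> r \<le> dist E x b \<Longrightarrow> r \<le> dout V E x"
  unfolding dout_def by (rule SUP_upper2)

lemma din_ge: "a \<in> V \<Longrightarrow> r \<le> dist E a x \<Longrightarrow> r \<le> din V E x"
  unfolding din_def by (rule SUP_upper2)

lemma diametral_pair:
  assumes "diameter V E = enat N" and "V \<noteq> {}"
  obtains a b where "a \<in> V" "b \<in> V" "dist E a b = enat N"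
proof (cases N)
  case 0
  obtain a where "a \<in> V" using assms(2) by blast
  moreover have "dist E a a = 0"
    using dist_le_relpow[where E = E and n = 0 and u = a and v = a]
    by (simp add: zero_enat_def[symmetric])
  ultimately show thesis using that 0 by (simp add: zero_enat_def)
next
  case (Suc n)
  have "enat n < diameter V E" using assms(1) Suc by simp
  then obtain a b where ab: "a \<in> V" "b \<in> V" "enat n < dist E a b"
    unfolding diameter_def less_SUP_iff by blast
  have "dist E a b \<le> enat N" using dist_le_diameter[OF ab(1,2), where E = E] assms(1) by simp
  with ab(3) Suc have "dist E a b = enat N" by (cases "dist E a b") auto
  then show thesis using that ab(1,2) by blast
qed

lemma approx_diam_sparse_unfold:
  "approx_diam_sparse V E \<Delta> ht w =
     max (SUP x\<in>high_deg V E \<Delta>. dout V E x)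
         (max (dout V E w)
              (SUP v\<in>ball_out V E w (min (enat ht + 1) (dist_set E w (high_deg V E \<Delta>))).
                 din V E v))"
  unfolding approx_diam_sparse_def Let_def by simp

lemma approx_diam_sparse_le_diameter:
  assumes "w \<in> V"
  shows "approx_diam_sparse V E \<Delta> ht w \<le> diameter V E"
  unfolding approx_diam_sparse_unfold
  using assms dout_le_diameter din_le_diameter
  by (auto intro!: SUP_least simp: high_deg_def ball_out_def)

lemma approx_diam_sparse_ge_high:
  "x \<in> high_deg V E \<Delta> \<Longrightarrow> r \<le> dout V E x \<Longrightarrow> r \<le> approx_diam_sparse V E \<Delta> ht w"
  unfolding approx_diam_sparse_unfold by (meson SUP_upper2 max.coboundedI1)

lemma approx_diam_sparse_ge_center:
  "r \<le> dout V E w \<Longrightarrow> r \<le> approx_diam_sparse V E \<Delta> ht w"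
  unfolding approx_diam_sparse_unfold by (simp add: le_max_iff_disj)

lemma approx_diam_sparse_ge_ball:
  "v \<in> ball_out V E w (min (enat ht + 1) (dist_set E w (high_deg V E \<Delta>))) \<Longrightarrow>
   r \<le> din V E v \<Longrightarrow> r \<le> approx_diam_sparse V E \<Delta> ht w"
  unfolding approx_diam_sparse_unfold by (meson SUP_upper2 max.coboundedI2)

lemma lower_bound_near_high:
  assumes "b \<in> V" and "dist E a b = enat (3 * h + z)"
    and "x \<in> high_deg V E \<Delta>" and "dist E a x \<le> enat h"
  shows "enat (2 * h + z) \<le> approx_diam_sparse V E \<Delta> ht w"
proof -
  have "enat (h + (2 * h + z)) \<le> dist E a b" using assms(2) by simp
  then have "enat (2 * h + z) \<le> dist E x b" using assms(4) by (rule far_from_target)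
  then show ?thesis
    by (rule approx_diam_sparse_ge_high[OF assms(3) dout_ge[OF assms(1)]])
qed

text \<open>Case 2: if the explored ball around w has radius at least h+1, either w itself or a
  vertex of the ball on a shortest path from w to b certifies the bound.\<close>
lemma lower_bound_sparse:
  assumes "E \<subseteq> V \<times> V" and "a \<in> V" "b \<in> V" "w \<in> V"
    and "dist E a b = enat (3 * h + z)" and "z \<le> 2"
    and radius: "enat (h + 1) \<le> min (enat ht + 1) (dist_set E w (high_deg V E \<Delta>))"
  shows "enat (2 * h + z) \<le> approx_diam_sparse V E \<Delta> ht w"
proof (cases "enat (2 * h + z) \<le> dout V E w")
  case True
  then show ?thesis by (rule approx_diam_sparse_ge_center)
next
  case False
  then have "dist E w b < enat (2 * h + z)"
    using dout_ge[OF \<open>b \<in> V\<close>] by (meson not_le)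
  then obtain m where m: "dist E w b = enat m" "m < 2 * h + z"
    by (cases "dist E w b") auto
  define k where "k = min m (h + 1)"
  have "k \<le> m" by (simp add: k_def)
  then obtain v where wv: "(w, v) \<in> E ^^ k" and vb: "dist E v b \<le> enat (m - k)"
    by (rule dist_split[OF m(1)])
  have "v \<in> ball_out V E w (min (enat ht + 1) (dist_set E w (high_deg V E \<Delta>)))"
  proof -
    have "dist E w v \<le> enat (h + 1)" using dist_le_relpow[OF wv] k_def
      by (metis enat_ord_simps(1) min.cobounded2 order_trans)
    then show ?thesis
      using relpow_stays_in[OF assms(1) wv \<open>w \<in> V\<close>] radius
      unfolding ball_out_def by (blast intro: order_trans)
  qed
  moreover have "enat (2 * h + z) \<le> dist E a v"
  proof (rule far_from_source[OF _ vb])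
    show "enat ((m - k) + (2 * h + z)) \<le> dist E a b"
      using assms(5,6) m(2) k_def by simp
  qed
  ultimately show ?thesis by (rule approx_diam_sparse_ge_ball[OF _ din_ge[OF \<open>a \<in> V\<close>]])
qed

lemma dist_set_gt:
  assumes "\<forall>x\<in>H. enat h < dist E a x"
  shows "enat (h + 1) \<le> dist_set E a H"
  unfolding dist_set_def
proof (rule INF_greatest)
  show "enat (h + 1) \<le> dist E a x" if "x \<in> H" for x
    using assms that by (simp add: Suc_ile_eq)
qed

theorem lemma9:
  fixes V :: "'a set" and E :: "('a \<times> 'a) set"
    and h z \<Delta> ht :: nat and w :: 'a
  assumes "finite V" and "V \<noteq> {}" and "E \<subseteq> V \<times> V"
    and "\<forall>v. (v, v) \<notin> E"
    and "diameter V E = enat (3 * h + z)" and "z \<le> 2"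
    and "\<Delta> \<ge> 1" and "ht \<ge> h"
    and "w \<in> V"
    and "\<forall>v\<in>V. dist_set E v (high_deg V E \<Delta>) \<le> dist_set E w (high_deg V E \<Delta>)"
  shows "enat (2 * h + z) \<le> approx_diam_sparse V E \<Delta> ht w
       \<and> approx_diam_sparse V E \<Delta> ht w \<le> enat (3 * h + z)"
proof
  show "approx_diam_sparse V E \<Delta> ht w \<le> enat (3 * h + z)"
    using approx_diam_sparse_le_diameter[OF \<open>w \<in> V\<close>, where E = E] assms(5) by simp
  obtain a b where ab: "a \<in> V" "b \<in> V" "dist E a b = enat (3 * h + z)"
    using diametral_pair[OF assms(5,2)] .
  show "enat (2 * h + z) \<le> approx_diam_sparse V E \<Delta> ht w"
  proof (cases "\<exists>x\<in>high_deg V E \<Delta>. dist E a x \<le> enat h")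
    case True
    then obtain x where "x \<in> high_deg V E \<Delta>" "dist E a x \<le> enat h" ..
    then show ?thesis by (rule lower_bound_near_high[OF ab(2,3)])
  next
    case False
    then have "enat (h + 1) \<le> dist_set E a (high_deg V E \<Delta>)"
      by (intro dist_set_gt) (auto simp: not_le)
    also have "\<dots> \<le> dist_set E w (high_deg V E \<Delta>)" using assms(10) ab(1) by blast
    finally have "enat (h + 1) \<le> min (enat ht + 1) (dist_set E w (high_deg V E \<Delta>))"
      using \<open>ht \<ge> h\<close> by (simp add: one_enat_def)
    then show ?thesis by (rule lower_bound_sparse[OF assms(3) ab(1,2) assms(9) ab(3) assms(6)])
  qed
qed

end
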